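(* Let $L$ be a $3$-dimensional $\mathbb{Z}_p$-Lie lattice such that $[L,L]$ has rank $1$. Then $L$ is not self-similar of index $p$.
   Context: $p$ is any prime. A $\mathbb{Z}_p$-Lie lattice is a $\mathbb{Z}_p$-Lie algebra whose underlying module is finitely generated and free; dimension means rank. A virtual endomorphism of $L$ is a homomorphism of algebras $\varphi:M\to L$ with $M\subseteq L$ a finite-index subalgebra, of index $[L:M]$. An ideal $I$ of $L$ is $\varphi$-invariant if it lies in the domain of every power of $\varphi$ and $\varphi(I)\subseteq I$; $\varphi$ is simple if no non-zero ideal is $\varphi$-invariant. $L$ is self-similar of index $p^k$ if it has a simple virtual endomorphism of index $p^k$. *)

theory Defs
  imports Main "HOL-Computational_Algebra.Primes"
begin

section \<open>The p-adic integers Z_p as the inverse limit of Z/p^n\<close>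

definition zp :: "nat \<Rightarrow> (nat \<Rightarrow> int) set" where
  "zp p = {x. (\<forall>n. 0 \<le> x n \<and> x n < int p ^ n) \<and> (\<forall>n. x (Suc n) mod (int p ^ n) = x n)}"

definition zp_zero :: "nat \<Rightarrow> int" where
  "zp_zero = (\<lambda>n. 0)"

definition zp_add :: "nat \<Rightarrow> (nat \<Rightarrow> int) \<Rightarrow> (nat \<Rightarrow> int) \<Rightarrow> (nat \<Rightarrow> int)" where
  "zp_add p x y = (\<lambda>n. (x n + y n) mod (int p ^ n))"

definition zp_mul :: "nat \<Rightarrow> (nat \<Rightarrow> int) \<Rightarrow> (nat \<Rightarrow> int) \<Rightarrow> (nat \<Rightarrow> int)" where
  "zp_mul p x y = (\<lambda>n. (x n * y n) mod (int p ^ n))"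

type_synonym zpvec = "nat \<Rightarrow> nat \<Rightarrow> int"

definition zpvec :: "nat \<Rightarrow> nat \<Rightarrow> zpvec set" where
  "zpvec p d = {v. (\<forall>i<d. v i \<in> zp p) \<and> (\<forall>i\<ge>d. v i = zp_zero)}"

definition vzero :: zpvec where
  "vzero = (\<lambda>i. zp_zero)"

definition vadd :: "nat \<Rightarrow> zpvec \<Rightarrow> zpvec \<Rightarrow> zpvec" where
  "vadd p u v = (\<lambda>i. zp_add p (u i) (v i))"

definition vsmul :: "nat \<Rightarrow> (nat \<Rightarrow> int) \<Rightarrow> zpvec \<Rightarrow> zpvec" where
  "vsmul p c v = (\<lambda>i. zp_mul p c (v i))"

definition submod :: "nat \<Rightarrow> nat \<Rightarrow> zpvec set \<Rightarrow> bool" where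
  "submod p d N \<longleftrightarrow> N \<subseteq> zpvec p d \<and> vzero \<in> N \<and>
     (\<forall>u\<in>N. \<forall>v\<in>N. vadd p u v \<in> N) \<and> (\<forall>c\<in>zp p. \<forall>v\<in>N. vsmul p c v \<in> N)"

inductive_set zspan :: "nat \<Rightarrow> zpvec set \<Rightarrow> zpvec set" for p :: nat and S :: "zpvec set" where
  zspan_zero: "vzero \<in> zspan p S"
| zspan_step: "v \<in> S \<Longrightarrow> c \<in> zp p \<Longrightarrow> u \<in> zspan p S \<Longrightarrow> vadd p (vsmul p c v) u \<in> zspan p S"

definition lincomb :: "nat \<Rightarrow> (nat \<Rightarrow> int) list \<Rightarrow> zpvec list \<Rightarrow> zpvec" where
  "lincomb p cs ws = foldr (\<lambda>(c, w) acc. vadd p (vsmul p c w) acc) (zip cs ws) vzero"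

definition lin_indep :: "nat \<Rightarrow> zpvec list \<Rightarrow> bool" where
  "lin_indep p ws \<longleftrightarrow> (\<forall>cs. length cs = length ws \<and> set cs \<subseteq> zp p \<and> lincomb p cs ws = vzero
       \<longrightarrow> (\<forall>c\<in>set cs. c = zp_zero))"

definition free_of_rank :: "nat \<Rightarrow> zpvec set \<Rightarrow> nat \<Rightarrow> bool" where
  "free_of_rank p N r \<longleftrightarrow> (\<exists>ws. length ws = r \<and> set ws \<subseteq> N \<and> zspan p (set ws) = N \<and> lin_indep p ws)"

definition lie_lattice :: "nat \<Rightarrow> nat \<Rightarrow> (zpvec \<Rightarrow> zpvec \<Rightarrow> zpvec) \<Rightarrow> bool" where
  "lie_lattice p d br \<longleftrightarrow>
     (\<forall>x\<in>zpvec p d. \<forall>y\<in>zpvec p d. br x y \<in> zpvec p d) \<and>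
     (\<forall>x\<in>zpvec p d. \<forall>y\<in>zpvec p d. \<forall>z\<in>zpvec p d.
        br (vadd p x y) z = vadd p (br x z) (br y z) \<and> br z (vadd p x y) = vadd p (br z x) (br z y)) \<and>
     (\<forall>c\<in>zp p. \<forall>x\<in>zpvec p d. \<forall>y\<in>zpvec p d.
        br (vsmul p c x) y = vsmul p c (br x y) \<and> br x (vsmul p c y) = vsmul p c (br x y)) \<and>
     (\<forall>x\<in>zpvec p d. br x x = vzero) \<and>
     (\<forall>x\<in>zpvec p d. \<forall>y\<in>zpvec p d. \<forall>z\<in>zpvec p d.
        vadd p (vadd p (br x (br y z)) (br y (br z x))) (br z (br x y)) = vzero)"

definition derived :: "nat \<Rightarrow> nat \<Rightarrow> (zpvec \<Rightarrow> zpvec \<Rightarrow> zpvec) \<Rightarrow> zpvec set" where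
  "derived p d br = zspan p {br x y | x y. x \<in> zpvec p d \<and> y \<in> zpvec p d}"

definition subalgebra :: "nat \<Rightarrow> nat \<Rightarrow> (zpvec \<Rightarrow> zpvec \<Rightarrow> zpvec) \<Rightarrow> zpvec set \<Rightarrow> bool" where
  "subalgebra p d br M \<longleftrightarrow> submod p d M \<and> (\<forall>x\<in>M. \<forall>y\<in>M. br x y \<in> M)"

definition lie_ideal :: "nat \<Rightarrow> nat \<Rightarrow> (zpvec \<Rightarrow> zpvec \<Rightarrow> zpvec) \<Rightarrow> zpvec set \<Rightarrow> bool" where
  "lie_ideal p d br I \<longleftrightarrow> submod p d I \<and> (\<forall>x\<in>zpvec p d. \<forall>y\<in>I. br x y \<in> I)"

definition cosets :: "nat \<Rightarrow> nat \<Rightarrow> zpvec set \<Rightarrow> zpvec set set" where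
  "cosets p d M = (\<lambda>v. {vadd p v m | m. m \<in> M}) ` zpvec p d"

definition lie_hom_on :: "nat \<Rightarrow> nat \<Rightarrow> (zpvec \<Rightarrow> zpvec \<Rightarrow> zpvec) \<Rightarrow> zpvec set \<Rightarrow> (zpvec \<Rightarrow> zpvec) \<Rightarrow> bool" where
  "lie_hom_on p d br M \<phi> \<longleftrightarrow>
     (\<forall>x\<in>M. \<phi> x \<in> zpvec p d) \<and>
     (\<forall>x\<in>M. \<forall>y\<in>M. \<phi> (vadd p x y) = vadd p (\<phi> x) (\<phi> y)) \<and>
     (\<forall>c\<in>zp p. \<forall>x\<in>M. \<phi> (vsmul p c x) = vsmul p c (\<phi> x)) \<and>
     (\<forall>x\<in>M. \<forall>y\<in>M. \<phi> (br x y) = br (\<phi> x) (\<phi> y))"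

definition virtual_endo :: "nat \<Rightarrow> nat \<Rightarrow> (zpvec \<Rightarrow> zpvec \<Rightarrow> zpvec) \<Rightarrow> zpvec set \<Rightarrow> (zpvec \<Rightarrow> zpvec) \<Rightarrow> bool" where
  "virtual_endo p d br M \<phi> \<longleftrightarrow> subalgebra p d br M \<and> finite (cosets p d M) \<and> lie_hom_on p d br M \<phi>"

primrec phi_dom :: "nat \<Rightarrow> nat \<Rightarrow> zpvec set \<Rightarrow> (zpvec \<Rightarrow> zpvec) \<Rightarrow> nat \<Rightarrow> zpvec set" where
  "phi_dom p d M \<phi> 0 = zpvec p d"
| "phi_dom p d M \<phi> (Suc n) = {x \<in> M. \<phi> x \<in> phi_dom p d M \<phi> n}"

definition phi_invariant :: "nat \<Rightarrow> nat \<Rightarrow> (zpvec \<Rightarrow> zpvec \<Rightarrow> zpvec) \<Rightarrow> zpvec set \<Rightarrow> (zpvec \<Rightarrow> zpvec) \<Rightarrow> zpvec set \<Rightarrow> bool" where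
  "phi_invariant p d br M \<phi> I \<longleftrightarrow> lie_ideal p d br I \<and> (\<forall>n. I \<subseteq> phi_dom p d M \<phi> n) \<and> \<phi> ` I \<subseteq> I"

definition simple_ve :: "nat \<Rightarrow> nat \<Rightarrow> (zpvec \<Rightarrow> zpvec \<Rightarrow> zpvec) \<Rightarrow> zpvec set \<Rightarrow> (zpvec \<Rightarrow> zpvec) \<Rightarrow> bool" where
  "simple_ve p d br M \<phi> \<longleftrightarrow> (\<forall>I. phi_invariant p d br M \<phi> I \<longrightarrow> I = {vzero})"

definition self_similar_of_index :: "nat \<Rightarrow> nat \<Rightarrow> (zpvec \<Rightarrow> zpvec \<Rightarrow> zpvec) \<Rightarrow> nat \<Rightarrow> bool" where
  "self_similar_of_index p d br q \<longleftrightarrow>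
     (\<exists>M \<phi>. virtual_endo p d br M \<phi> \<and> card (cosets p d M) = q \<and> simple_ve p d br M \<phi>)"

end

theory Submission
  imports Defs "HOL-Number_Theory.Cong"
begin

(* Write [L, L] = Z_p w with w = p^k c and c primitive. Saturation of the line Z_p c makes c a common
   eigenvector of ad: [x, c] = lambda(x) c. As M has index p, pL is contained in M, hence
   p^2 [L, L] in [M, M], and phi maps the intersection of M and Z_p c into Z_p c.
   If c is in M, the line Z_p c is a phi-invariant ideal. Otherwise phi(pc) = mu c; if p divides mu,
   the line Z_p pc is phi-invariant. If mu is a unit, [L, L] is not contained in [M, M], which yields
   m0 in M with lambda(m0) c outside [M, M]. Then the centre of L lies in M and is phi-invariant
   (lambda o phi = lambda on M), and it is nonzero because in rank 3 some nonzero element of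
   ker lambda commutes with m0, and such an element is central by the Jacobi identity. *)

section \<open>The p-adic integers\<close>

locale padic =
  fixes p :: nat
  assumes prime_p: "prime p"
begin

lemma prime_int_p: "prime (int p)"
  using prime_p by simp

lemma p_power_pos: "int p ^ n > 0"
  using prime_gt_0_nat[OF prime_p] by simp

lemma zp_bounds: "x \<in> zp p \<Longrightarrow> 0 \<le> x n \<and> x n < int p ^ n"
  by (simp add: zp_def)

lemma zp_mod_self [simp]: "x \<in> zp p \<Longrightarrow> x n mod int p ^ n = x n"
  using zp_bounds[of x n] by simp

lemma zp_mod_power_le: "x \<in> zp p \<Longrightarrow> m \<le> n \<Longrightarrow> x n mod int p ^ m = x m"
proof (induction n)
  case 0
  then show ?case using zp_bounds[OF 0(1), of 0] by simp
next
  case (Suc n)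
  show ?case
  proof (cases "m = Suc n")
    case True
    then show ?thesis using Suc.prems(1) zp_mod_self by metis
  next
    case False
    then have "m \<le> n" using Suc by simp
    then have "int p ^ m dvd int p ^ n" by (simp add: le_imp_power_dvd)
    moreover have "x (Suc n) mod int p ^ n = x n" using Suc.prems by (simp add: zp_def)
    ultimately have "x (Suc n) mod int p ^ m = x n mod int p ^ m"
      by (metis mod_mod_cancel)
    then show ?thesis using Suc.IH[OF Suc.prems(1) \<open>m \<le> n\<close>] by simp
  qed
qed

lemma zp_cong_Suc: "x \<in> zp p \<Longrightarrow> [x (Suc n) = x n] (mod int p ^ n)"
  by (simp add: cong_def zp_def)

lemma zp_reduce_mem:
  assumes "\<And>n. [g (Suc n) = g n] (mod int p ^ n)"
  shows "(\<lambda>n. g n mod int p ^ n) \<in> zp p"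
proof -
  have "(g (Suc n) mod int p ^ Suc n) mod int p ^ n = g n mod int p ^ n" for n
  proof -
    have "int p ^ n dvd int p ^ Suc n" by simp
    then have "(g (Suc n) mod int p ^ Suc n) mod int p ^ n = g (Suc n) mod int p ^ n"
      by (metis mod_mod_cancel)
    also have "\<dots> = g n mod int p ^ n" using assms[of n] by (simp add: cong_def)
    finally show ?thesis .
  qed
  then show ?thesis unfolding zp_def using p_power_pos by (auto simp: pos_mod_bound)
qed

definition zp_of_int :: "int \<Rightarrow> nat \<Rightarrow> int" where
  "zp_of_int t = (\<lambda>n. t mod int p ^ n)"

definition zp_neg :: "(nat \<Rightarrow> int) \<Rightarrow> nat \<Rightarrow> int" where
  "zp_neg x = (\<lambda>n. (- x n) mod int p ^ n)"

definition zp_sub :: "(nat \<Rightarrow> int) \<Rightarrow> (nat \<Rightarrow> int) \<Rightarrow> nat \<Rightarrow> int" where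
  "zp_sub x y = zp_add p x (zp_neg y)"

lemmas zp_simps = zp_add_def zp_mul_def zp_of_int_def zp_neg_def zp_sub_def zp_zero_def

lemma zp_zero_mem [simp]: "zp_zero \<in> zp p"
  unfolding zp_def zp_zero_def using p_power_pos by auto

lemma zp_add_mem [simp]: "x \<in> zp p \<Longrightarrow> y \<in> zp p \<Longrightarrow> zp_add p x y \<in> zp p"
  unfolding zp_add_def by (rule zp_reduce_mem) (intro cong_add zp_cong_Suc)

lemma zp_mul_mem [simp]: "x \<in> zp p \<Longrightarrow> y \<in> zp p \<Longrightarrow> zp_mul p x y \<in> zp p"
  unfolding zp_mul_def by (rule zp_reduce_mem) (intro cong_mult zp_cong_Suc)

lemma zp_of_int_mem [simp]: "zp_of_int t \<in> zp p"
  unfolding zp_of_int_def by (rule zp_reduce_mem) simp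

lemma zp_neg_mem [simp]: "x \<in> zp p \<Longrightarrow> zp_neg x \<in> zp p"
  unfolding zp_neg_def
  by (rule zp_reduce_mem) (intro cong_minus_minus_iff[THEN iffD2] zp_cong_Suc)

lemma zp_sub_mem [simp]: "x \<in> zp p \<Longrightarrow> y \<in> zp p \<Longrightarrow> zp_sub x y \<in> zp p"
  unfolding zp_sub_def by simp

lemma zp_eqI: "x \<in> zp p \<Longrightarrow> y \<in> zp p \<Longrightarrow> (\<And>n. [x n = y n] (mod int p ^ n)) \<Longrightarrow> x = y"
  by (rule ext) (metis cong_def zp_mod_self)

lemma zp_add_zero [simp]: "x \<in> zp p \<Longrightarrow> zp_add p x zp_zero = x"
  by (rule ext) (simp add: zp_simps)

lemma zp_mul_zero [simp]: "zp_mul p x zp_zero = zp_zero"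
  by (rule ext) (simp add: zp_simps)

lemma zp_mul_comm: "zp_mul p x y = zp_mul p y x"
  by (rule ext) (simp add: zp_simps mult.commute)

lemma zp_mul_assoc: "zp_mul p (zp_mul p a b) d = zp_mul p a (zp_mul p b d)"
  by (rule ext) (simp add: zp_simps mod_simps ac_simps)

lemma zp_mul_left_commute: "zp_mul p a (zp_mul p b d) = zp_mul p b (zp_mul p a d)"
  by (rule ext) (simp add: zp_simps mod_simps ac_simps)

lemma zp_mul_one [simp]: "x \<in> zp p \<Longrightarrow> zp_mul p x (zp_of_int 1) = x"
  by (rule ext) (simp add: zp_simps mod_simps)

lemma zp_one_mul [simp]: "x \<in> zp p \<Longrightarrow> zp_mul p (zp_of_int 1) x = x"
  by (rule ext) (simp add: zp_simps mod_simps)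

lemma zp_of_int_mult: "zp_mul p (zp_of_int a) (zp_of_int b) = zp_of_int (a * b)"
  by (rule ext) (simp add: zp_simps mod_simps)

lemma zp_neg_zero [simp]: "zp_neg zp_zero = zp_zero"
  by (rule ext) (simp add: zp_simps)

lemma zp_neg_neg: "x \<in> zp p \<Longrightarrow> zp_neg (zp_neg x) = x"
  by (rule ext) (simp add: zp_simps mod_simps)

lemma zp_neg_eq_zero_iff [simp]: "x \<in> zp p \<Longrightarrow> zp_neg x = zp_zero \<longleftrightarrow> x = zp_zero"
  using zp_neg_neg[of x] by auto

lemma zp_sub_eq_zero_imp_eq:
  assumes x: "x \<in> zp p" and y: "y \<in> zp p" and e: "zp_sub x y = zp_zero"
  shows "x = y"
proof (rule zp_eqI[OF x y])
  fix n
  have "(x n + (- y n) mod int p ^ n) mod int p ^ n = 0"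
    using fun_cong[OF e, of n] by (simp add: zp_simps)
  then have "(x n - y n) mod int p ^ n = 0" by (simp add: mod_simps)
  then show "[x n = y n] (mod int p ^ n)"
    by (simp add: cong_iff_dvd_diff mod_eq_0_iff_dvd)
qed

lemma prime_power_not_dvd_mult:
  fixes P X Y :: int
  assumes P: "prime P" and a: "\<not> P ^ a dvd X" and b: "\<not> P ^ b dvd Y"
  shows "\<not> P ^ (a + b) dvd X * Y"
proof -
  have X: "X \<noteq> 0" and Y: "Y \<noteq> 0" using a b by auto
  have unit: "\<not> is_unit P" using P not_prime_unit by blast
  have "multiplicity P X < a"
    using a power_dvd_iff_le_multiplicity[OF X unit, of a] by (metis not_le)
  moreover have "multiplicity P Y < b"
    using b power_dvd_iff_le_multiplicity[OF Y unit, of b] by (metis not_le)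
  moreover have "multiplicity P (X * Y) = multiplicity P X + multiplicity P Y"
    using prime_elem_multiplicity_mult_distrib P X Y prime_imp_prime_elem by blast
  moreover have "X * Y \<noteq> 0" using X Y by simp
  ultimately show ?thesis
    using power_dvd_iff_le_multiplicity[of "X * Y" P "a + b"] unit by linarith
qed

lemma zp_nonzero_not_dvd:
  assumes x: "x \<in> zp p" and "x \<noteq> zp_zero"
  obtains n0 where "\<And>n. n0 \<le> n \<Longrightarrow> \<not> int p ^ n0 dvd x n"
proof -
  from assms obtain n0 where "x n0 \<noteq> 0" unfolding zp_zero_def by auto
  then have "\<not> int p ^ n0 dvd x n" if "n0 \<le> n" for n
    using zp_mod_power_le[OF x that] by (auto simp: dvd_eq_mod_eq_0)
  then show ?thesis using that by blast
qed

lemma zp_mul_eq_zero: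
  assumes x: "x \<in> zp p" and y: "y \<in> zp p" and e: "zp_mul p x y = zp_zero"
  shows "x = zp_zero \<or> y = zp_zero"
proof (rule ccontr)
  assume "\<not> ?thesis"
  then obtain n0 n1 where n0: "\<And>n. n0 \<le> n \<Longrightarrow> \<not> int p ^ n0 dvd x n"
    and n1: "\<And>n. n1 \<le> n \<Longrightarrow> \<not> int p ^ n1 dvd y n"
    using zp_nonzero_not_dvd[OF x] zp_nonzero_not_dvd[OF y] by metis
  have "\<not> int p ^ (n0 + n1) dvd x (n0 + n1) * y (n0 + n1)"
    by (rule prime_power_not_dvd_mult[OF prime_int_p n0 n1]) auto
  moreover have "(x (n0 + n1) * y (n0 + n1)) mod int p ^ (n0 + n1) = 0"
    using fun_cong[OF e, of "n0 + n1"] by (simp add: zp_simps)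
  ultimately show False by (simp add: mod_eq_0_iff_dvd)
qed

lemma zp_mul_left_cancel:
  assumes a: "a \<in> zp p" "a \<noteq> zp_zero" and x: "x \<in> zp p" and y: "y \<in> zp p"
    and e: "zp_mul p a x = zp_mul p a y"
  shows "x = y"
proof -
  have "zp_mul p a (zp_sub x y) = zp_sub (zp_mul p a x) (zp_mul p a y)"
    by (rule ext) (simp add: zp_simps mod_simps algebra_simps)
  also have "\<dots> = zp_zero"
    unfolding e by (rule ext) (simp add: zp_simps mod_simps)
  finally have "zp_sub x y = zp_zero"
    using zp_mul_eq_zero[OF a(1)] a(2) x y by simp
  then show ?thesis using zp_sub_eq_zero_imp_eq x y by blast
qed

lemma zp_of_int_p_power_nonzero: "zp_of_int (int p ^ j) \<noteq> zp_zero"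
proof
  assume "zp_of_int (int p ^ j) = zp_zero"
  then have "int p ^ j mod int p ^ Suc j = 0"
    using fun_cong[of _ _ "Suc j"] by (fastforce simp: zp_simps)
  moreover have "int p ^ j < int p ^ Suc j"
    using prime_gt_1_nat[OF prime_p] by simp
  ultimately show False using p_power_pos[of j] by (simp add: zmod_trivial_iff)
qed

lemma zp_dvd_level_one_iff: "x \<in> zp p \<Longrightarrow> int p dvd x 1 \<longleftrightarrow> x 1 = 0"
  using zp_bounds[of x 1] zdvd_imp_le[of "int p" "x 1"] by force

lemma zp_divide_by_p:
  assumes r: "r \<in> zp p" and r1: "r 1 = 0"
  obtains s where "s \<in> zp p" "r = zp_mul p (zp_of_int (int p)) s"
proof -
  define s where "s n = r (Suc n) div int p" for n
  have p0: "int p > 0" using p_power_pos[of 1] by simp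
  have r_Suc: "r (Suc n) = int p * s n" for n
  proof -
    have "r (Suc n) mod int p = r 1" using zp_mod_power_le[OF r, of 1 "Suc n"] by simp
    then have "int p dvd r (Suc n)" using r1 by (simp add: mod_eq_0_iff_dvd)
    then show ?thesis unfolding s_def by simp
  qed
  have "s \<in> zp p"
    unfolding zp_def mem_Collect_eq
  proof (intro conjI allI)
    fix n
    have "0 \<le> int p * s n" "int p * s n < int p * int p ^ n"
      using zp_bounds[OF r, of "Suc n"] unfolding r_Suc by simp_all
    then show "0 \<le> s n" "s n < int p ^ n"
      using p0 by (simp_all add: zero_le_mult_iff)
    have "int p * (s (Suc n) mod int p ^ n) = (int p * s (Suc n)) mod (int p * int p ^ n)"
      by (rule mod_mult_mult1[symmetric])
    also have "\<dots> = int p * s n"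
      using zp_mod_power_le[OF r, of "Suc n" "Suc (Suc n)"] unfolding r_Suc by simp
    finally show "s (Suc n) mod int p ^ n = s n" using p0 by simp
  qed
  moreover have "r = zp_mul p (zp_of_int (int p)) s"
  proof (rule ext)
    fix n
    have "zp_mul p (zp_of_int (int p)) s n = r (Suc n) mod int p ^ n"
      unfolding r_Suc by (simp add: zp_simps mod_simps)
    also have "\<dots> = r n" using r by (simp add: zp_def)
    finally show "r n = zp_mul p (zp_of_int (int p)) s n" by simp
  qed
  ultimately show ?thesis using that by blast
qed

lemma not_p_dvd_int: "0 < j \<Longrightarrow> j < p \<Longrightarrow> \<not> int p dvd int j"
  using zdvd_imp_le[of "int p" "int j"] by auto

lemma zp_of_int_invertible:
  assumes t: "\<not> int p dvd t"
  obtains s where "s \<in> zp p" "zp_mul p (zp_of_int t) s = zp_of_int 1"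
proof -
  have "coprime t (int p)"
    using t prime_int_p by (metis coprime_commute prime_imp_coprime)
  then have cop: "coprime t (int p ^ n)" for n by simp
  define inv where "inv n = (SOME x. [t * x = 1] (mod int p ^ n))" for n
  have inv: "[t * inv n = 1] (mod int p ^ n)" for n
    unfolding inv_def using cong_solve_coprime_int[OF cop[of n]] by (rule someI_ex)
  have "[inv (Suc n) = inv n] (mod int p ^ n)" for n
  proof -
    have "[t * inv (Suc n) = 1] (mod int p ^ n)"
      using inv[of "Suc n"] by (rule cong_dvd_modulus) simp
    then have "[t * inv (Suc n) = t * inv n] (mod int p ^ n)"
      using inv[of n] by (meson cong_sym cong_trans)
    then show ?thesis using cong_mult_lcancel[OF cop[of n]] by blast
  qed
  then have "(\<lambda>n. inv n mod int p ^ n) \<in> zp p" by (rule zp_reduce_mem)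
  moreover have "zp_mul p (zp_of_int t) (\<lambda>n. inv n mod int p ^ n) = zp_of_int 1"
  proof (rule ext)
    fix n
    have "zp_mul p (zp_of_int t) (\<lambda>n. inv n mod int p ^ n) n = t * inv n mod int p ^ n"
      by (simp add: zp_simps mod_simps)
    also have "\<dots> = 1 mod int p ^ n" using inv[of n] by (simp add: cong_def)
    finally show "zp_mul p (zp_of_int t) (\<lambda>n. inv n mod int p ^ n) n = zp_of_int 1 n"
      by (simp add: zp_of_int_def)
  qed
  ultimately show ?thesis using that by blast
qed

section \<open>Vectors over the p-adic integers\<close>

lemmas zpvec_simps = vadd_def vsmul_def vzero_def

definition vneg :: "zpvec \<Rightarrow> zpvec" where
  "vneg v = vsmul p (zp_of_int (-1)) v"

lemma vneg_eq: "vneg v = (\<lambda>i n. (- v i n) mod int p ^ n)"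
  unfolding vneg_def by (intro ext) (simp add: zpvec_simps zp_simps mod_simps)

lemma zpvec_high_zero: "v \<in> zpvec p d \<Longrightarrow> d \<le> i \<Longrightarrow> v i = zp_zero"
  by (simp add: zpvec_def)

lemma zpvec_coord_mem: "v \<in> zpvec p d \<Longrightarrow> i < d \<Longrightarrow> v i \<in> zp p"
  by (simp add: zpvec_def)

lemma zpvec_mod_self [simp]: "v \<in> zpvec p d \<Longrightarrow> v i n mod int p ^ n = v i n"
  by (cases "i < d") (simp_all add: zpvec_coord_mem zpvec_high_zero zp_zero_def)

lemma vzero_mem [simp]: "vzero \<in> zpvec p d"
  by (simp add: zpvec_def vzero_def)

lemma vadd_mem [simp]: "u \<in> zpvec p d \<Longrightarrow> v \<in> zpvec p d \<Longrightarrow> vadd p u v \<in> zpvec p d"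
  unfolding zpvec_def vadd_def by auto

lemma vsmul_mem [simp]: "a \<in> zp p \<Longrightarrow> v \<in> zpvec p d \<Longrightarrow> vsmul p a v \<in> zpvec p d"
  unfolding zpvec_def vsmul_def by auto

lemma vneg_mem [simp]: "v \<in> zpvec p d \<Longrightarrow> vneg v \<in> zpvec p d"
  unfolding vneg_def by simp

lemma zpvec_eqI: "u \<in> zpvec p d \<Longrightarrow> v \<in> zpvec p d \<Longrightarrow> (\<And>i. i < d \<Longrightarrow> u i = v i) \<Longrightarrow> u = v"
  by (rule ext) (metis not_le zpvec_high_zero)

lemma vadd_zero [simp]: "u \<in> zpvec p d \<Longrightarrow> vadd p u vzero = u"
  by (intro ext) (simp add: zpvec_simps zp_simps)

lemma zero_vadd [simp]: "u \<in> zpvec p d \<Longrightarrow> vadd p vzero u = u"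
  by (intro ext) (simp add: zpvec_simps zp_simps)

lemma vadd_comm: "vadd p u v = vadd p v u"
  by (intro ext) (simp add: zpvec_simps zp_simps add.commute)

lemma vadd_assoc: "vadd p (vadd p u v) w = vadd p u (vadd p v w)"
  by (intro ext) (simp add: zpvec_simps zp_simps mod_simps add.assoc)

lemma vsmul_vadd: "vsmul p a (vadd p u v) = vadd p (vsmul p a u) (vsmul p a v)"
  by (intro ext) (simp add: zpvec_simps zp_simps mod_simps algebra_simps)

lemma vsmul_add_scalar: "vsmul p (zp_add p a b) u = vadd p (vsmul p a u) (vsmul p b u)"
  by (intro ext) (simp add: zpvec_simps zp_simps mod_simps algebra_simps)

lemma vsmul_vsmul: "vsmul p a (vsmul p b u) = vsmul p (zp_mul p a b) u"
  by (intro ext) (simp add: zpvec_simps zp_simps mod_simps algebra_simps)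

lemma vsmul_one [simp]: "u \<in> zpvec p d \<Longrightarrow> vsmul p (zp_of_int 1) u = u"
  by (intro ext) (simp add: zpvec_simps zp_simps mod_simps)

lemma vsmul_zero [simp]: "vsmul p zp_zero u = vzero"
  by (intro ext) (simp add: zpvec_simps zp_simps)

lemma vsmul_vzero [simp]: "vsmul p a vzero = vzero"
  by (intro ext) (simp add: zpvec_simps zp_simps)

lemma vsmul_of_int_zero [simp]: "vsmul p (zp_of_int 0) u = vzero"
  by (intro ext) (simp add: zpvec_simps zp_simps)

lemma vadd_solve_right:
  "a \<in> zpvec p d \<Longrightarrow> b \<in> zpvec p d \<Longrightarrow> vadd p a b = c \<Longrightarrow> b = vadd p c (vneg a)"
  unfolding vneg_eq by (intro ext) (auto simp: zpvec_simps zp_simps mod_simps)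

lemma vadd_eq_zero_imp_vneg:
  assumes a: "a \<in> zpvec p d" and b: "b \<in> zpvec p d" and e: "vadd p a b = vzero"
  shows "b = vneg a"
  using vadd_solve_right[OF a b e] vneg_mem[OF a] by simp

lemma vsmul_of_int_diff:
  "vadd p (vsmul p (zp_of_int i) x) (vneg (vsmul p (zp_of_int j) x)) = vsmul p (zp_of_int (i - j)) x"
  unfolding vneg_eq by (intro ext) (simp add: zpvec_simps zp_simps mod_simps algebra_simps)

lemma zpvec_nonzero_coord:
  assumes v: "v \<in> zpvec p d" and "v \<noteq> vzero"
  obtains i where "i < d" "v i \<noteq> zp_zero"
proof -
  have "\<exists>i<d. v i \<noteq> zp_zero"
  proof (rule ccontr)
    assume "\<not> ?thesis"
    then have "v = vzero" by (intro zpvec_eqI[OF v vzero_mem]) (auto simp: vzero_def)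
    then show False using assms(2) by simp
  qed
  then show ?thesis using that by blast
qed

lemma vsmul_eq_zero:
  assumes a: "a \<in> zp p" and v: "v \<in> zpvec p d" and e: "vsmul p a v = vzero"
  shows "a = zp_zero \<or> v = vzero"
proof (rule ccontr)
  assume "\<not> ?thesis"
  then obtain i where i: "i < d" "v i \<noteq> zp_zero" "a \<noteq> zp_zero"
    using zpvec_nonzero_coord[OF v] by metis
  have "zp_mul p a (v i) = zp_zero" using fun_cong[OF e, of i] by (simp add: vsmul_def vzero_def)
  then show False using zp_mul_eq_zero[OF a zpvec_coord_mem[OF v i(1)]] i by blast
qed

lemma vsmul_right_cancel:
  assumes v: "v \<in> zpvec p d" "v \<noteq> vzero" and a: "a \<in> zp p" and b: "b \<in> zp p"
    and e: "vsmul p a v = vsmul p b v"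
  shows "a = b"
proof -
  obtain i where i: "i < d" "v i \<noteq> zp_zero" using zpvec_nonzero_coord[OF v] by blast
  have "zp_mul p (v i) a = zp_mul p (v i) b"
    using fun_cong[OF e, of i] by (simp add: vsmul_def zp_mul_comm)
  then show ?thesis using zp_mul_left_cancel[OF zpvec_coord_mem[OF v(1) i(1)] i(2) a b] by blast
qed

lemma vsmul_left_cancel:
  assumes a: "a \<in> zp p" "a \<noteq> zp_zero" and u: "u \<in> zpvec p d" and v: "v \<in> zpvec p d"
    and e: "vsmul p a u = vsmul p a v"
  shows "u = v"
proof (rule zpvec_eqI[OF u v])
  fix i assume i: "i < d"
  have "zp_mul p a (u i) = zp_mul p a (v i)" using fun_cong[OF e, of i] by (simp add: vsmul_def)
  then show "u i = v i" using zp_mul_left_cancel[OF a zpvec_coord_mem[OF u i] zpvec_coord_mem[OF v i]] by blast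
qed

definition line :: "zpvec \<Rightarrow> zpvec set" where
  "line v = {vsmul p r v | r. r \<in> zp p}"

lemma mem_line_iff: "u \<in> line v \<longleftrightarrow> (\<exists>r \<in> zp p. u = vsmul p r v)"
  unfolding line_def by blast

lemma line_memI: "r \<in> zp p \<Longrightarrow> vsmul p r v \<in> line v"
  unfolding line_def by blast

lemma self_mem_line: "v \<in> zpvec p d \<Longrightarrow> v \<in> line v"
  using line_memI[OF zp_of_int_mem, of 1 v] by simp

lemma zspan_subset: "S \<subseteq> zpvec p d \<Longrightarrow> zspan p S \<subseteq> zpvec p d"
proof
  fix x assume S: "S \<subseteq> zpvec p d" and "x \<in> zspan p S"
  from this(2) show "x \<in> zpvec p d" by (induction rule: zspan.induct) (use S in auto)
qed

lemma zspan_base: "v \<in> S \<Longrightarrow> v \<in> zpvec p d \<Longrightarrow> v \<in> zspan p S"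
  using zspan_step[where v=v and c="zp_of_int 1" and u=vzero and S=S and p=p] zspan_zero[of p S]
  by simp

lemma zspan_add:
  assumes S: "S \<subseteq> zpvec p d" and u: "u \<in> zspan p S" and v: "v \<in> zspan p S"
  shows "vadd p u v \<in> zspan p S"
  using u
proof (induction rule: zspan.induct)
  case zspan_zero
  then show ?case using v zspan_subset[OF S] by auto
next
  case (zspan_step x c u)
  then show ?case using zspan.zspan_step[OF zspan_step(1,2,4)] by (simp add: vadd_assoc)
qed

lemma zspan_smul:
  assumes a: "a \<in> zp p" and u: "u \<in> zspan p S"
  shows "vsmul p a u \<in> zspan p S"
  using u
proof (induction rule: zspan.induct)
  case zspan_zero
  then show ?case by (simp add: zspan.zspan_zero)
next
  case (zspan_step x c u)
  then show ?case
    using zspan.zspan_step[OF zspan_step(1) zp_mul_mem[OF a zspan_step(2)] zspan_step(4)]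
    by (simp add: vsmul_vadd vsmul_vsmul)
qed

lemma zspan_minimal:
  assumes "vzero \<in> N" "\<And>u v. u \<in> N \<Longrightarrow> v \<in> N \<Longrightarrow> vadd p u v \<in> N"
    "\<And>c v. c \<in> zp p \<Longrightarrow> v \<in> N \<Longrightarrow> vsmul p c v \<in> N" "S \<subseteq> N"
  shows "zspan p S \<subseteq> N"
proof
  fix x assume "x \<in> zspan p S"
  then show "x \<in> N" by (induction rule: zspan.induct) (use assms in blast)+
qed

lemma zspan_singleton_subset_line:
  assumes w: "w \<in> zpvec p d"
  shows "zspan p {w} \<subseteq> line w"
proof
  fix x assume "x \<in> zspan p {w}"
  then show "x \<in> line w"
  proof (induction rule: zspan.induct)
    case zspan_zero
    show ?case using line_memI[OF zp_zero_mem, of w] by simp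
  next
    case (zspan_step v c u)
    then obtain r where "r \<in> zp p" "u = vsmul p r w" unfolding line_def by blast
    then show ?case
      using zspan_step line_memI[of "zp_add p c r" w] by (simp add: vsmul_add_scalar)
  qed
qed

lemma free_of_rank_one_generator:
  assumes "free_of_rank p N 1"
  obtains w where "w \<noteq> vzero" "w \<in> N" "N = zspan p {w}"
proof -
  obtain ws where ws: "length ws = 1" "set ws \<subseteq> N" "zspan p (set ws) = N" "lin_indep p ws"
    using assms unfolding free_of_rank_def by blast
  then obtain w where w: "ws = [w]" by (metis One_nat_def length_0_conv length_Suc_conv)
  have "w \<noteq> vzero"
  proof
    assume "w = vzero"
    then have "lincomb p [zp_of_int 1] ws = vzero" unfolding w lincomb_def by simp
    then have "zp_of_int 1 = zp_zero"
      using spec[OF ws(4)[unfolded lin_indep_def], of "[zp_of_int 1]"] w by simp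
    then show False using zp_of_int_p_power_nonzero[of 0] by simp
  qed
  then show ?thesis using that ws w by simp
qed

definition primitive :: "nat \<Rightarrow> zpvec \<Rightarrow> bool" where
  "primitive d c \<longleftrightarrow> c \<in> zpvec p d \<and> \<not> (\<exists>v \<in> zpvec p d. c = vsmul p (zp_of_int (int p)) v)"

lemma primitive_factorization:
  assumes w: "w \<in> zpvec p d" and w0: "w \<noteq> vzero"
  obtains k c where "primitive d c" "w = vsmul p (zp_of_int (int p ^ k)) c"
proof -
  define A where "A = {k. \<exists>c \<in> zpvec p d. w = vsmul p (zp_of_int (int p ^ k)) c}"
  obtain i where "i < d" "w i \<noteq> zp_zero" using zpvec_nonzero_coord[OF w w0] by blast
  then obtain n0 where n0: "w i n0 \<noteq> 0" unfolding zp_zero_def by auto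
  have "k < n0" if "k \<in> A" for k
  proof (rule ccontr)
    assume "\<not> k < n0"
    then have "int p ^ n0 dvd int p ^ k" by (simp add: le_imp_power_dvd)
    moreover from that obtain c where "w = vsmul p (zp_of_int (int p ^ k)) c"
      unfolding A_def by blast
    ultimately have "w i n0 = 0" by (simp add: vsmul_def zp_simps)
    then show False using n0 by simp
  qed
  then have finA: "finite A" by (meson finite_lessThan finite_subset lessThan_iff subsetI)
  have "0 \<in> A" unfolding A_def using w by (intro CollectI bexI[of _ w]) auto
  then have "Max A \<in> A" using finA by (intro Max_in) auto
  then obtain c where c: "c \<in> zpvec p d" "w = vsmul p (zp_of_int (int p ^ Max A)) c"
    unfolding A_def by blast
  have "primitive d c"
    unfolding primitive_def
  proof (intro conjI c(1) notI)
    assume "\<exists>v \<in> zpvec p d. c = vsmul p (zp_of_int (int p)) v"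
    then obtain v where v: "v \<in> zpvec p d" "c = vsmul p (zp_of_int (int p)) v" by blast
    have "w = vsmul p (zp_of_int (int p ^ Suc (Max A))) v"
      using c(2) v(2) by (simp add: vsmul_vsmul zp_of_int_mult mult.commute)
    then have "Suc (Max A) \<in> A" unfolding A_def using v(1) by blast
    then show False using Max_ge[OF finA] by fastforce
  qed
  then show ?thesis using that c(2) by blast
qed

lemma zpvec_divisible_by_p:
  assumes v: "v \<in> zpvec p d" and v1: "\<And>i. i < d \<Longrightarrow> v i 1 = 0"
  obtains u where "u \<in> zpvec p d" "v = vsmul p (zp_of_int (int p)) u"
proof -
  have "\<forall>i. \<exists>s. i < d \<longrightarrow> s \<in> zp p \<and> v i = zp_mul p (zp_of_int (int p)) s"
    using zp_divide_by_p[OF zpvec_coord_mem[OF v] v1] by metis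
  then obtain f where f: "\<And>i. i < d \<Longrightarrow> f i \<in> zp p \<and> v i = zp_mul p (zp_of_int (int p)) (f i)"
    by metis
  define u where "u i = (if i < d then f i else zp_zero)" for i
  have u: "u i \<in> zp p \<and> v i = zp_mul p (zp_of_int (int p)) (u i)" if "i < d" for i
    using f[OF that] that by (simp add: u_def)
  have "u \<in> zpvec p d" unfolding zpvec_def using u by (auto simp: u_def)
  moreover have "v = vsmul p (zp_of_int (int p)) u"
    by (rule zpvec_eqI[OF v vsmul_mem[OF zp_of_int_mem \<open>u \<in> zpvec p d\<close>]])
      (simp add: vsmul_def u)
  ultimately show ?thesis using that by blast
qed

lemma primitive_coord_nonzero_mod_p:
  assumes "primitive d c"
  obtains i where "i < d" "c i 1 \<noteq> 0"
  using assms zpvec_divisible_by_p[of c d] unfolding primitive_def by metis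

lemma primitive_saturated_step:
  assumes c: "primitive d c" and v: "v \<in> zpvec p d" and r: "r \<in> zp p"
    and e: "vsmul p (zp_of_int (int p)) v = vsmul p r c"
  shows "\<exists>s \<in> zp p. v = vsmul p s c"
proof (cases "r 1 = 0")
  case True
  obtain s where s: "s \<in> zp p" "r = zp_mul p (zp_of_int (int p)) s"
    using zp_divide_by_p[OF r True] by blast
  have "c \<in> zpvec p d" using c unfolding primitive_def by simp
  moreover have "vsmul p (zp_of_int (int p)) v = vsmul p (zp_of_int (int p)) (vsmul p s c)"
    using e s by (simp add: vsmul_vsmul)
  ultimately have "v = vsmul p s c"
    using vsmul_left_cancel[OF zp_of_int_mem zp_of_int_p_power_nonzero[of 1] v] s(1) by simp
  then show ?thesis using s(1) by blast
next
  case False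
  obtain i where i: "i < d" "c i 1 \<noteq> 0" using primitive_coord_nonzero_mod_p[OF c] by blast
  have ci: "c i \<in> zp p" using c i(1) zpvec_coord_mem unfolding primitive_def by blast
  have "(int p mod int p * v i 1) mod int p = (r 1 * c i 1) mod int p"
    using fun_cong[OF fun_cong[OF e, of i], of 1] by (simp add: vsmul_def zp_simps)
  then have "int p dvd r 1 * c i 1" by (simp add: mod_eq_0_iff_dvd)
  then show ?thesis
    using prime_dvd_mult_iff[OF prime_int_p] zp_dvd_level_one_iff[OF r] zp_dvd_level_one_iff[OF ci]
      False i(2) by blast
qed

lemma primitive_saturated:
  assumes c: "primitive d c"
  shows "v \<in> zpvec p d \<Longrightarrow> r \<in> zp p \<Longrightarrow> vsmul p (zp_of_int (int p ^ j)) v = vsmul p r c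
    \<Longrightarrow> \<exists>s \<in> zp p. v = vsmul p s c"
proof (induction j arbitrary: v r)
  case 0
  then show ?case by auto
next
  case (Suc j)
  have "vsmul p (zp_of_int (int p ^ j)) (vsmul p (zp_of_int (int p)) v) = vsmul p r c"
    using Suc.prems by (simp add: vsmul_vsmul zp_of_int_mult mult.commute)
  then obtain s where "s \<in> zp p" "vsmul p (zp_of_int (int p)) v = vsmul p s c"
    using Suc.IH[of "vsmul p (zp_of_int (int p)) v" r] Suc.prems by auto
  then show ?case using primitive_saturated_step[OF c Suc.prems(1)] by blast
qed

definition dot3 :: "(nat \<Rightarrow> int) \<Rightarrow> (nat \<Rightarrow> int) \<Rightarrow> (nat \<Rightarrow> int) \<Rightarrow>
    (nat \<Rightarrow> int) \<Rightarrow> (nat \<Rightarrow> int) \<Rightarrow> (nat \<Rightarrow> int) \<Rightarrow> nat \<Rightarrow> int" where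
  "dot3 x0 x1 x2 a0 a1 a2 = zp_add p (zp_mul p x0 a0) (zp_add p (zp_mul p x1 a1) (zp_mul p x2 a2))"

text \<open>The cross product \<open>a \<times> b\<close> is orthogonal to \<open>a\<close> and \<open>b\<close>; if it vanishes, \<open>a\<close> and \<open>b\<close> are
  proportional and a nonzero vector orthogonal to \<open>a\<close> will do.\<close>

lemma dot3_common_zero:
  assumes a: "a0 \<in> zp p" "a1 \<in> zp p" "a2 \<in> zp p" and b: "b0 \<in> zp p" "b1 \<in> zp p" "b2 \<in> zp p"
    and a_nonzero: "\<not> (a0 = zp_zero \<and> a1 = zp_zero \<and> a2 = zp_zero)"
  obtains x0 x1 x2 where "x0 \<in> zp p" "x1 \<in> zp p" "x2 \<in> zp p"
    "\<not> (x0 = zp_zero \<and> x1 = zp_zero \<and> x2 = zp_zero)"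
    "dot3 x0 x1 x2 a0 a1 a2 = zp_zero" "dot3 x0 x1 x2 b0 b1 b2 = zp_zero"
proof -
  let ?X0 = "zp_sub (zp_mul p a1 b2) (zp_mul p a2 b1)"
  let ?X1 = "zp_sub (zp_mul p a2 b0) (zp_mul p a0 b2)"
  let ?X2 = "zp_sub (zp_mul p a0 b1) (zp_mul p a1 b0)"
  have cross_a: "dot3 ?X0 ?X1 ?X2 a0 a1 a2 = zp_zero"
    by (rule ext) (simp add: dot3_def zp_simps mod_simps, (simp add: algebra_simps)?)
  have cross_b: "dot3 ?X0 ?X1 ?X2 b0 b1 b2 = zp_zero"
    by (rule ext) (simp add: dot3_def zp_simps mod_simps, (simp add: algebra_simps)?)
  have perp01_a: "dot3 a1 (zp_neg a0) zp_zero a0 a1 a2 = zp_zero"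
    by (rule ext) (simp add: dot3_def zp_simps mod_simps, (simp add: algebra_simps)?)
  have perp01_b: "dot3 a1 (zp_neg a0) zp_zero b0 b1 b2 = zp_neg ?X2"
    by (rule ext) (simp add: dot3_def zp_simps mod_simps, (simp add: algebra_simps)?)
  have perp02_a: "dot3 a2 zp_zero (zp_neg a0) a0 a1 a2 = zp_zero"
    by (rule ext) (simp add: dot3_def zp_simps mod_simps, (simp add: algebra_simps)?)
  have perp02_b: "dot3 a2 zp_zero (zp_neg a0) b0 b1 b2 = ?X1"
    by (rule ext) (simp add: dot3_def zp_simps mod_simps, (simp add: algebra_simps)?)
  consider "\<not> (?X0 = zp_zero \<and> ?X1 = zp_zero \<and> ?X2 = zp_zero)"
    | "?X2 = zp_zero" "\<not> (a0 = zp_zero \<and> a1 = zp_zero)"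
    | "?X1 = zp_zero" "a0 = zp_zero" "a2 \<noteq> zp_zero"
    using a_nonzero by blast
  then show ?thesis
  proof cases
    case 1
    show ?thesis by (rule that[OF _ _ _ 1 cross_a cross_b]) (use a b in simp_all)
  next
    case 2
    then show ?thesis using that[of a1 "zp_neg a0" zp_zero] perp01_a perp01_b a by auto
  next
    case 3
    then show ?thesis using that[of a2 zp_zero "zp_neg a0"] perp02_a perp02_b a by auto
  qed
qed

definition unit_vec :: "nat \<Rightarrow> zpvec" where
  "unit_vec j = (\<lambda>i. if i = j then zp_of_int 1 else zp_zero)"

definition vec3 :: "(nat \<Rightarrow> int) \<Rightarrow> (nat \<Rightarrow> int) \<Rightarrow> (nat \<Rightarrow> int) \<Rightarrow> zpvec" where
  "vec3 a0 a1 a2 = (\<lambda>i. if i = 0 then a0 else if i = 1 then a1 else if i = 2 then a2 else zp_zero)"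

lemma unit_vec_mem: "j < 3 \<Longrightarrow> unit_vec j \<in> zpvec p 3"
  unfolding zpvec_def unit_vec_def by auto

lemma vec3_mem: "a0 \<in> zp p \<Longrightarrow> a1 \<in> zp p \<Longrightarrow> a2 \<in> zp p \<Longrightarrow> vec3 a0 a1 a2 \<in> zpvec p 3"
  unfolding zpvec_def vec3_def by auto

lemma vec3_coords:
  assumes u: "u \<in> zpvec p 3"
  shows "u = vec3 (u 0) (u 1) (u 2)"
proof (rule zpvec_eqI[OF u vec3_mem])
  fix i :: nat assume "i < 3"
  then have "i = 0 \<or> i = 1 \<or> i = 2" by arith
  then show "u i = vec3 (u 0) (u 1) (u 2) i" unfolding vec3_def by auto
qed (use u zpvec_coord_mem in auto)

lemma vec3_eq_zero_iff: "vec3 a0 a1 a2 = vzero \<longleftrightarrow> a0 = zp_zero \<and> a1 = zp_zero \<and> a2 = zp_zero"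
proof
  assume "vec3 a0 a1 a2 = vzero"
  then have "vec3 a0 a1 a2 0 = vzero 0" "vec3 a0 a1 a2 1 = vzero 1" "vec3 a0 a1 a2 2 = vzero 2"
    by simp_all
  then show "a0 = zp_zero \<and> a1 = zp_zero \<and> a2 = zp_zero" by (simp add: vec3_def vzero_def)
qed (auto simp: vec3_def vzero_def)

lemma vec3_eq_sum:
  "a0 \<in> zp p \<Longrightarrow> a1 \<in> zp p \<Longrightarrow> a2 \<in> zp p \<Longrightarrow> vec3 a0 a1 a2 =
    vadd p (vsmul p a0 (unit_vec 0)) (vadd p (vsmul p a1 (unit_vec 1)) (vsmul p a2 (unit_vec 2)))"
  by (intro ext) (simp add: vec3_def unit_vec_def zpvec_simps zp_simps mod_simps)

lemma linear_map_vec3: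
  assumes f_add: "\<And>x y. x \<in> zpvec p 3 \<Longrightarrow> y \<in> zpvec p 3 \<Longrightarrow> f (vadd p x y) = vadd p (f x) (f y)"
    and f_smul: "\<And>a x. a \<in> zp p \<Longrightarrow> x \<in> zpvec p 3 \<Longrightarrow> f (vsmul p a x) = vsmul p a (f x)"
    and f_unit: "\<And>j. j < 3 \<Longrightarrow> f (unit_vec j) = vsmul p (s j) v"
    and a: "a0 \<in> zp p" "a1 \<in> zp p" "a2 \<in> zp p"
  shows "f (vec3 a0 a1 a2) = vsmul p (dot3 a0 a1 a2 (s 0) (s 1) (s 2)) v"
proof -
  have "f (vec3 a0 a1 a2) = vadd p (vsmul p a0 (vsmul p (s 0) v))
      (vadd p (vsmul p a1 (vsmul p (s 1) v)) (vsmul p a2 (vsmul p (s 2) v)))"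
    using a unit_vec_mem[of 0] unit_vec_mem[of 1] unit_vec_mem[of 2]
    by (simp add: vec3_eq_sum f_add f_smul f_unit)
  also have "\<dots> = vsmul p (dot3 a0 a1 a2 (s 0) (s 1) (s 2)) v"
    by (intro ext) (simp add: zpvec_simps zp_simps dot3_def mod_simps, simp add: algebra_simps)
  finally show ?thesis .
qed

end

section \<open>Lie lattices and virtual endomorphisms\<close>

locale padic_lie_lattice = padic +
  fixes d :: nat and br :: "zpvec \<Rightarrow> zpvec \<Rightarrow> zpvec"
  assumes lie: "lie_lattice p d br"
begin

abbreviation L :: "zpvec set" where
  "L \<equiv> zpvec p d"

abbreviation D :: "zpvec set" where
  "D \<equiv> derived p d br"

(* the simplifier cannot guess the dimension in the membership premises *)
declare vadd_zero[of _ d, simp] zero_vadd[of _ d, simp] vsmul_one[of _ d, simp]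

lemma br_mem [simp]: "x \<in> L \<Longrightarrow> y \<in> L \<Longrightarrow> br x y \<in> L"
  using lie unfolding lie_lattice_def by blast

lemma br_add_left: "x \<in> L \<Longrightarrow> y \<in> L \<Longrightarrow> z \<in> L \<Longrightarrow> br (vadd p x y) z = vadd p (br x z) (br y z)"
  using lie unfolding lie_lattice_def by blast

lemma br_add_right: "x \<in> L \<Longrightarrow> y \<in> L \<Longrightarrow> z \<in> L \<Longrightarrow> br z (vadd p x y) = vadd p (br z x) (br z y)"
  using lie unfolding lie_lattice_def by blast

lemma br_smul_left: "c \<in> zp p \<Longrightarrow> x \<in> L \<Longrightarrow> y \<in> L \<Longrightarrow> br (vsmul p c x) y = vsmul p c (br x y)"
  using lie unfolding lie_lattice_def by blast

lemma br_smul_right: "c \<in> zp p \<Longrightarrow> x \<in> L \<Longrightarrow> y \<in> L \<Longrightarrow> br x (vsmul p c y) = vsmul p c (br x y)"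
  using lie unfolding lie_lattice_def by blast

lemma br_self: "x \<in> L \<Longrightarrow> br x x = vzero"
  using lie unfolding lie_lattice_def by blast

lemma jacobi: "x \<in> L \<Longrightarrow> y \<in> L \<Longrightarrow> z \<in> L \<Longrightarrow>
    vadd p (vadd p (br x (br y z)) (br y (br z x))) (br z (br x y)) = vzero"
  using lie unfolding lie_lattice_def by blast

lemma br_zero_right [simp]: "x \<in> L \<Longrightarrow> br x vzero = vzero"
  using br_smul_right[of zp_zero x vzero] by simp

lemma br_anticomm:
  assumes x: "x \<in> L" and y: "y \<in> L"
  shows "br y x = vneg (br x y)"
proof -
  have "vzero = br (vadd p x y) (vadd p x y)" using x y by (simp add: br_self)
  also have "\<dots> = vadd p (vadd p (br x x) (br y x)) (vadd p (br x y) (br y y))"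
    using x y by (simp add: br_add_left br_add_right)
  also have "\<dots> = vadd p (br y x) (br x y)" using x y by (simp add: br_self)
  also have "\<dots> = vadd p (br x y) (br y x)" by (rule vadd_comm)
  finally show ?thesis using vadd_eq_zero_imp_vneg[of "br x y" d "br y x"] x y by simp
qed

lemma derived_subset: "D \<subseteq> L"
  unfolding derived_def by (rule zspan_subset) auto

lemma br_mem_derived: "x \<in> L \<Longrightarrow> y \<in> L \<Longrightarrow> br x y \<in> D"
  unfolding derived_def by (rule zspan_base[where d=d]) auto

definition center :: "zpvec set" where
  "center = {z \<in> L. \<forall>v \<in> L. br v z = vzero}"

lemma center_ideal: "lie_ideal p d br center"
  unfolding lie_ideal_def submod_def center_def by (auto simp: br_add_right br_smul_right)

end

locale padic_lie_virtual_endo = padic_lie_lattice +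
  fixes M :: "zpvec set" and \<phi> :: "zpvec \<Rightarrow> zpvec"
  assumes ve: "virtual_endo p d br M \<phi>"
begin

lemma M_subset: "M \<subseteq> L"
  using ve unfolding virtual_endo_def subalgebra_def submod_def by blast

lemma M_mem_L: "x \<in> M \<Longrightarrow> x \<in> L"
  using M_subset by blast

lemma vzero_mem_M: "vzero \<in> M"
  using ve unfolding virtual_endo_def subalgebra_def submod_def by blast

lemma vadd_mem_M: "x \<in> M \<Longrightarrow> y \<in> M \<Longrightarrow> vadd p x y \<in> M"
  using ve unfolding virtual_endo_def subalgebra_def submod_def by blast

lemma vsmul_mem_M: "c \<in> zp p \<Longrightarrow> x \<in> M \<Longrightarrow> vsmul p c x \<in> M"
  using ve unfolding virtual_endo_def subalgebra_def submod_def by blast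

lemma br_mem_M: "x \<in> M \<Longrightarrow> y \<in> M \<Longrightarrow> br x y \<in> M"
  using ve unfolding virtual_endo_def subalgebra_def by blast

lemma phi_mem: "x \<in> M \<Longrightarrow> \<phi> x \<in> L"
  using ve unfolding virtual_endo_def lie_hom_on_def by blast

lemma phi_vadd: "x \<in> M \<Longrightarrow> y \<in> M \<Longrightarrow> \<phi> (vadd p x y) = vadd p (\<phi> x) (\<phi> y)"
  using ve unfolding virtual_endo_def lie_hom_on_def by blast

lemma phi_vsmul: "c \<in> zp p \<Longrightarrow> x \<in> M \<Longrightarrow> \<phi> (vsmul p c x) = vsmul p c (\<phi> x)"
  using ve unfolding virtual_endo_def lie_hom_on_def by blast

lemma phi_br: "x \<in> M \<Longrightarrow> y \<in> M \<Longrightarrow> \<phi> (br x y) = br (\<phi> x) (\<phi> y)"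
  using ve unfolding virtual_endo_def lie_hom_on_def by blast

lemma phi_vzero [simp]: "\<phi> vzero = vzero"
  using phi_vsmul[OF zp_zero_mem vzero_mem_M] by simp

lemma phi_invariantI:
  assumes "lie_ideal p d br I" "I \<subseteq> M" "\<And>x. x \<in> I \<Longrightarrow> \<phi> x \<in> I"
  shows "phi_invariant p d br M \<phi> I"
proof -
  have "I \<subseteq> phi_dom p d M \<phi> n" for n
    by (induction n) (use assms M_subset in auto)
  then show ?thesis unfolding phi_invariant_def using assms by blast
qed

definition derived_M :: "zpvec set" where
  "derived_M = zspan p {br x y | x y. x \<in> M \<and> y \<in> M}"

lemma derived_M_subset_M: "derived_M \<subseteq> M"
  unfolding derived_M_def
  by (rule zspan_minimal) (use vzero_mem_M vadd_mem_M vsmul_mem_M br_mem_M in auto)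

lemma vzero_mem_derived_M: "vzero \<in> derived_M"
  unfolding derived_M_def by (rule zspan_zero)

lemma vadd_mem_derived_M: "u \<in> derived_M \<Longrightarrow> v \<in> derived_M \<Longrightarrow> vadd p u v \<in> derived_M"
  unfolding derived_M_def by (rule zspan_add[where d=d]) (auto simp: M_mem_L)

lemma vsmul_mem_derived_M: "c \<in> zp p \<Longrightarrow> u \<in> derived_M \<Longrightarrow> vsmul p c u \<in> derived_M"
  unfolding derived_M_def by (rule zspan_smul)

lemma vneg_mem_derived_M: "u \<in> derived_M \<Longrightarrow> vneg u \<in> derived_M"
  unfolding vneg_def by (rule vsmul_mem_derived_M) simp

lemma br_mem_derived_M: "x \<in> M \<Longrightarrow> y \<in> M \<Longrightarrow> br x y \<in> derived_M"
  unfolding derived_M_def by (rule zspan_base[where d=d]) (auto simp: M_mem_L)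

lemma phi_derived_M_subset_derived: "u \<in> derived_M \<Longrightarrow> \<phi> u \<in> D"
  unfolding derived_M_def
proof (induction rule: zspan.induct)
  case zspan_zero
  show ?case unfolding derived_def by (simp add: zspan.zspan_zero)
next
  case (zspan_step v c u)
  then obtain x y where xy: "v = br x y" "x \<in> M" "y \<in> M" by blast
  have "v \<in> M" "u \<in> M"
    using xy br_mem_M zspan_step(3) derived_M_subset_M unfolding derived_M_def by auto
  then have "\<phi> (vadd p (vsmul p c v) u) = vadd p (vsmul p c (\<phi> v)) (\<phi> u)"
    using zspan_step(2) by (simp add: phi_vadd phi_vsmul vsmul_mem_M)
  moreover have "\<phi> v = br (\<phi> x) (\<phi> y)" using xy phi_br by simp
  ultimately show ?case
    using zspan.zspan_step[OF _ zspan_step(2) zspan_step.IH[unfolded derived_def]] xy phi_mem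
    unfolding derived_def by auto
qed

end

locale index_p_virtual_endo = padic_lie_virtual_endo +
  assumes index_p: "card (cosets p d M) = p"
begin

lemma mem_M_of_unit_multiple:
  assumes x: "x \<in> L" and t: "\<not> int p dvd t" and tx: "vsmul p (zp_of_int t) x \<in> M"
  shows "x \<in> M"
proof -
  obtain s where s: "s \<in> zp p" "zp_mul p (zp_of_int t) s = zp_of_int 1"
    using zp_of_int_invertible[OF t] by blast
  have "vsmul p s (vsmul p (zp_of_int t) x) = x" using s x by (simp add: vsmul_vsmul zp_mul_comm)
  then show ?thesis using vsmul_mem_M[OF s(1) tx] by simp
qed

lemma vsmul_of_int_diff_mem_M:
  assumes x: "x \<in> L" and m: "m \<in> M" and e: "vsmul p (zp_of_int j) x = vadd p (vsmul p (zp_of_int i) x) m"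
  shows "vsmul p (zp_of_int (j - i)) x \<in> M"
proof -
  have "m = vadd p (vsmul p (zp_of_int j) x) (vneg (vsmul p (zp_of_int i) x))"
    using vadd_solve_right[OF _ M_mem_L[OF m] e[symmetric]] x by simp
  then show ?thesis using m by (simp add: vsmul_of_int_diff)
qed

lemma multiples_incongruent_mod_M:
  assumes x: "x \<in> L" "x \<notin> M" and ij: "i < j" "j < p" and m: "m \<in> M"
  shows "vsmul p (zp_of_int (int j)) x \<noteq> vadd p (vsmul p (zp_of_int (int i)) x) m"
proof
  assume "vsmul p (zp_of_int (int j)) x = vadd p (vsmul p (zp_of_int (int i)) x) m"
  then have "vsmul p (zp_of_int (int (j - i))) x \<in> M"
    using vsmul_of_int_diff_mem_M[OF x(1) m] ij by (simp add: of_nat_diff)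
  moreover have "\<not> int p dvd int (j - i)" using not_p_dvd_int[of "j - i"] ij by (simp del: of_nat_diff)
  ultimately show False using mem_M_of_unit_multiple[OF x(1)] x(2) by blast
qed

lemma coset_representatives:
  assumes x: "x \<in> L" "x \<notin> M" and v: "v \<in> L"
  shows "\<exists>j < p. \<exists>m \<in> M. v = vadd p (vsmul p (zp_of_int (int j)) x) m"
proof -
  define coset where "coset u = {vadd p u m | m. m \<in> M}" for u
  have coset_eqD: "\<exists>m \<in> M. u = vadd p u' m" if "u \<in> L" "coset u = coset u'" for u u'
  proof -
    have "u \<in> coset u" unfolding coset_def using vzero_mem_M that(1) by force
    then show ?thesis using that(2) unfolding coset_def by blast
  qed
  let ?f = "\<lambda>j. coset (vsmul p (zp_of_int (int j)) x)"
  have distinct: "?f i \<noteq> ?f j" if "i < j" "j < p" for i j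
    using coset_eqD[OF vsmul_mem[OF zp_of_int_mem x(1)]] multiples_incongruent_mod_M[OF x that]
    by metis
  have "inj_on ?f {..<p}"
  proof (rule inj_onI)
    fix i j assume "i \<in> {..<p}" "j \<in> {..<p}" "?f i = ?f j"
    then show "i = j" using distinct[of i j] distinct[of j i] by (cases i j rule: linorder_cases) auto
  qed
  then have "card (?f ` {..<p}) = card (cosets p d M)" using card_image index_p by fastforce
  moreover have "?f ` {..<p} \<subseteq> cosets p d M"
    unfolding cosets_def coset_def using x by auto
  moreover have "finite (cosets p d M)" using ve unfolding virtual_endo_def by blast
  ultimately have "?f ` {..<p} = cosets p d M" using card_subset_eq by blast
  moreover have "coset v \<in> cosets p d M" unfolding cosets_def coset_def using v by blast
  ultimately obtain j where "j < p" "coset v = ?f j" by auto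
  then show ?thesis using coset_eqD[OF v] by blast
qed

lemma p_smul_mem_M:
  assumes v: "v \<in> L"
  shows "vsmul p (zp_of_int (int p)) v \<in> M"
proof (rule ccontr)
  assume pv: "vsmul p (zp_of_int (int p)) v \<notin> M"
  then have "v \<notin> M" using vsmul_mem_M by auto
  then obtain j m where jm: "j < p" "m \<in> M"
    "vsmul p (zp_of_int (int p)) v = vadd p (vsmul p (zp_of_int (int j)) v) m"
    using coset_representatives[OF v _ vsmul_mem[OF zp_of_int_mem v]] by blast
  then have "vsmul p (zp_of_int (int (p - j))) v \<in> M"
    using vsmul_of_int_diff_mem_M[OF v] by (simp add: of_nat_diff)
  moreover have "j \<noteq> 0"
  proof
    assume "j = 0"
    then have "vsmul p (zp_of_int (int p)) v = m" using jm(3) M_mem_L[OF jm(2)] by simp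
    then show False using pv jm(2) by simp
  qed
  then have "\<not> int p dvd int (p - j)" using not_p_dvd_int[of "p - j"] jm(1) by (simp del: of_nat_diff)
  ultimately show False using mem_M_of_unit_multiple[OF v] \<open>v \<notin> M\<close> by blast
qed

text \<open>Since \<open>pL \<subseteq> M\<close>, every \<open>p\<^sup>2[x, y] = [px, py]\<close> is a bracket of elements of \<open>M\<close>.\<close>

lemma p_square_derived_subset_derived_M:
  "u \<in> D \<Longrightarrow> vsmul p (zp_of_int (int p ^ 2)) u \<in> derived_M"
  unfolding derived_def
proof (induction rule: zspan.induct)
  case zspan_zero
  show ?case by (simp add: vzero_mem_derived_M)
next
  case (zspan_step v c u)
  then obtain x y where xy: "v = br x y" "x \<in> L" "y \<in> L" by blast
  let ?p = "zp_of_int (int p)"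
  have "vsmul p (zp_of_int (int p ^ 2)) v = br (vsmul p ?p x) (vsmul p ?p y)"
    using xy by (simp add: br_smul_left br_smul_right vsmul_vsmul zp_of_int_mult power2_eq_square)
  then have "vsmul p c (vsmul p (zp_of_int (int p ^ 2)) v) \<in> derived_M"
    using br_mem_derived_M[OF p_smul_mem_M p_smul_mem_M] xy vsmul_mem_derived_M[OF zspan_step(2)]
    by simp
  then have "vsmul p (zp_of_int (int p ^ 2)) (vsmul p c v) \<in> derived_M"
    by (simp add: vsmul_vsmul zp_mul_comm)
  then show ?case
    using vadd_mem_derived_M zspan_step.IH by (simp add: vsmul_vadd)
qed

end

section \<open>Derived algebra of rank one\<close>

locale rank_one_derived = index_p_virtual_endo +
  fixes w c :: zpvec and k :: nat
  assumes derived_eq: "D = zspan p {w}"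
    and w_eq: "w = vsmul p (zp_of_int (int p ^ k)) c"
    and w_nonzero: "w \<noteq> vzero"
    and c_primitive: "primitive d c"
begin

lemma c_mem: "c \<in> L"
  using c_primitive unfolding primitive_def by simp

lemma c_nonzero: "c \<noteq> vzero"
  using w_nonzero w_eq by auto

lemma w_mem: "w \<in> L"
  using w_eq c_mem by simp

lemma derived_subset_line: "D \<subseteq> line c"
proof
  fix u assume "u \<in> D"
  then have "u \<in> line w" using zspan_singleton_subset_line[OF w_mem] derived_eq by blast
  then obtain r where "r \<in> zp p" "u = vsmul p r w" using mem_line_iff by blast
  then show "u \<in> line c"
    using w_eq line_memI[of "zp_mul p r (zp_of_int (int p ^ k))" c] by (simp add: vsmul_vsmul)
qed

lemma derived_saturated:
  assumes v: "v \<in> L" and pv: "vsmul p (zp_of_int (int p ^ j)) v \<in> D"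
  shows "v \<in> line c"
proof -
  obtain r where "r \<in> zp p" "vsmul p (zp_of_int (int p ^ j)) v = vsmul p r c"
    using pv derived_subset_line mem_line_iff by blast
  then show ?thesis using primitive_saturated[OF c_primitive v] mem_line_iff by blast
qed

lemma br_c_mem_line: "x \<in> L \<Longrightarrow> br x c \<in> line c"
  using derived_saturated[of "br x c" k] br_mem_derived[OF _ w_mem] c_mem
  by (simp add: w_eq br_smul_right)

definition ad_eigenvalue :: "zpvec \<Rightarrow> nat \<Rightarrow> int" where
  "ad_eigenvalue x = (SOME r. r \<in> zp p \<and> br x c = vsmul p r c)"

lemma ad_eigenvalue: "x \<in> L \<Longrightarrow> ad_eigenvalue x \<in> zp p \<and> br x c = vsmul p (ad_eigenvalue x) c"
  using br_c_mem_line[of x] unfolding ad_eigenvalue_def mem_line_iff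
  by (metis (mono_tags, lifting) someI_ex)

lemma ad_eigenvalue_unique: "x \<in> L \<Longrightarrow> r \<in> zp p \<Longrightarrow> br x c = vsmul p r c \<Longrightarrow> ad_eigenvalue x = r"
  using ad_eigenvalue vsmul_right_cancel[OF c_mem c_nonzero] by metis

lemma lie_ideal_line:
  assumes v: "v \<in> line c"
  shows "lie_ideal p d br (line v)"
proof -
  obtain t where t: "t \<in> zp p" "v = vsmul p t c" using v mem_line_iff by blast
  have "line v \<subseteq> L" unfolding line_def using t c_mem by auto
  moreover have "vadd p x y \<in> line v" if "x \<in> line v" "y \<in> line v" for x y
    using that line_memI[OF zp_add_mem] by (auto simp: mem_line_iff vsmul_add_scalar)
  moreover have "vsmul p a x \<in> line v" if "a \<in> zp p" "x \<in> line v" for a x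
    using that line_memI[OF zp_mul_mem] by (auto simp: mem_line_iff vsmul_vsmul)
  moreover have "br x y \<in> line v" if x: "x \<in> L" and "y \<in> line v" for x y
  proof -
    obtain r where r: "r \<in> zp p" "y = vsmul p r v" using \<open>y \<in> line v\<close> mem_line_iff by blast
    have "br x y = vsmul p r (vsmul p t (vsmul p (ad_eigenvalue x) c))"
      using x r t c_mem ad_eigenvalue[OF x] by (simp add: br_smul_right)
    also have "\<dots> = vsmul p (zp_mul p r (ad_eigenvalue x)) v"
      unfolding t(2) by (simp add: vsmul_vsmul zp_mul_assoc zp_mul_comm zp_mul_left_commute)
    finally show ?thesis using line_memI r(1) ad_eigenvalue[OF x] by simp
  qed
  ultimately show ?thesis
    unfolding lie_ideal_def submod_def using line_memI[OF zp_zero_mem, of v] by auto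
qed

text \<open>\<open>p^(k+2) v\<close> lies in \<open>p\<^sup>2 D \<subseteq> [M, M]\<close>, which \<open>\<phi>\<close> maps into \<open>D\<close>; saturation
  brings \<open>\<phi> v\<close> back.\<close>

lemma phi_mem_line_c:
  assumes v: "v \<in> M" "v \<in> line c"
  shows "\<phi> v \<in> line c"
proof -
  obtain r where r: "r \<in> zp p" "v = vsmul p r c" using v(2) mem_line_iff by blast
  have "vsmul p (zp_of_int (int p ^ (k + 2))) v = vsmul p r (vsmul p (zp_of_int (int p ^ 2)) w)"
    unfolding r w_eq
    by (simp add: vsmul_vsmul zp_of_int_mult power_add zp_mul_comm power2_eq_square ac_simps)
  moreover have "vsmul p (zp_of_int (int p ^ 2)) w \<in> derived_M"
    using p_square_derived_subset_derived_M derived_eq zspan_base w_mem by simp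
  ultimately have "\<phi> (vsmul p (zp_of_int (int p ^ (k + 2))) v) \<in> D"
    using phi_derived_M_subset_derived vsmul_mem_derived_M[OF r(1)] by simp
  then show ?thesis
    using derived_saturated[OF phi_mem[OF v(1)]] phi_vsmul[OF zp_of_int_mem v(1)] by metis
qed

lemma phi_invariant_line:
  assumes v: "v \<in> M" "v \<in> line c" and phi_v: "\<phi> v \<in> line v"
  shows "phi_invariant p d br M \<phi> (line v)"
proof (rule phi_invariantI[OF lie_ideal_line[OF v(2)]])
  show "line v \<subseteq> M" using v(1) vsmul_mem_M by (auto simp: line_def)
  fix x assume "x \<in> line v"
  then obtain r where "r \<in> zp p" "x = vsmul p r v" using mem_line_iff by blast
  moreover obtain s where "s \<in> zp p" "\<phi> v = vsmul p s v" using phi_v mem_line_iff by blast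
  ultimately show "\<phi> x \<in> line v"
    using phi_vsmul v(1) line_memI[OF zp_mul_mem] by (simp add: vsmul_vsmul)
qed

text \<open>Jacobi: \<open>[x\<^sub>1, [u, v]] = -[u, [v, x\<^sub>1]] - [v, [x\<^sub>1, u]] = 0\<close>, because \<open>[v, x\<^sub>1] \<in> line c\<close>
  is killed by \<open>ad u\<close>; and \<open>ad x\<^sub>1\<close> is injective on \<open>line c \<supseteq> D\<close>.\<close>

lemma mem_center_of_commuting:
  assumes u: "u \<in> L" and x1: "x1 \<in> L" and lu: "ad_eigenvalue u = zp_zero"
    and lx: "ad_eigenvalue x1 \<noteq> zp_zero" and ux: "br x1 u = vzero"
  shows "u \<in> center"
  unfolding center_def
proof (intro CollectI conjI ballI u)
  fix v assume v: "v \<in> L"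
  obtain s where s: "s \<in> zp p" "br v x1 = vsmul p s c"
    using br_mem_derived[OF v x1] derived_subset_line mem_line_iff by blast
  have "br u (br v x1) = vzero"
    using s u c_mem ad_eigenvalue[OF u] lu by (simp add: br_smul_right)
  then have "br x1 (br u v) = vzero"
    using jacobi[OF x1 u v] ux u v x1 by simp
  moreover obtain r where r: "r \<in> zp p" "br u v = vsmul p r c"
    using br_mem_derived[OF u v] derived_subset_line mem_line_iff by blast
  ultimately have "vsmul p (zp_mul p r (ad_eigenvalue x1)) c = vzero"
    using x1 c_mem ad_eigenvalue[OF x1] by (simp add: br_smul_right vsmul_vsmul)
  then have "r = zp_zero"
    using vsmul_eq_zero[OF _ c_mem] zp_mul_eq_zero[OF r(1)] r ad_eigenvalue[OF x1] c_nonzero lx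
    by auto
  then show "br v u = vzero" using r br_anticomm[OF u v] by (simp add: vneg_def)
qed

lemma p_c_mem_M: "vsmul p (zp_of_int (int p)) c \<in> M"
  using p_smul_mem_M[OF c_mem] .

lemma br_mem_derived_M_of_eigenvalues:
  assumes cM: "c \<notin> M" and H: "\<And>m. m \<in> M \<Longrightarrow> vsmul p (ad_eigenvalue m) c \<in> derived_M"
    and x: "x \<in> L" and y: "y \<in> L"
  shows "br x y \<in> derived_M"
proof -
  obtain i m1 where i: "m1 \<in> M" "x = vadd p (vsmul p (zp_of_int (int i)) c) m1"
    using coset_representatives[OF c_mem cM x] by blast
  obtain j m2 where j: "m2 \<in> M" "y = vadd p (vsmul p (zp_of_int (int j)) c) m2"
    using coset_representatives[OF c_mem cM y] by blast
  have m1: "m1 \<in> L" and m2: "m2 \<in> L" using i j M_mem_L by auto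
  have "br c y = br c m2"
    unfolding j(2) using c_mem m2 by (simp add: br_add_right br_smul_right br_self)
  also have "\<dots> = vneg (vsmul p (ad_eigenvalue m2) c)"
    using br_anticomm[OF m2 c_mem] ad_eigenvalue[OF m2] by simp
  finally have cy: "br (vsmul p (zp_of_int (int i)) c) y \<in> derived_M"
    using c_mem y H[OF j(1)] by (simp add: br_smul_left vsmul_mem_derived_M vneg_mem_derived_M)
  have "br m1 y = vadd p (vsmul p (zp_of_int (int j)) (vsmul p (ad_eigenvalue m1) c)) (br m1 m2)"
    unfolding j(2) using c_mem m1 m2 ad_eigenvalue[OF m1] by (simp add: br_add_right br_smul_right)
  then have "br m1 y \<in> derived_M"
    using vadd_mem_derived_M vsmul_mem_derived_M H[OF i(1)] br_mem_derived_M[OF i(1) j(1)] by simp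
  then show ?thesis
    unfolding i(2) using cy c_mem m1 y by (simp add: br_add_left vadd_mem_derived_M)
qed

lemma derived_subset_derived_M:
  assumes "c \<notin> M" and "\<And>m. m \<in> M \<Longrightarrow> vsmul p (ad_eigenvalue m) c \<in> derived_M"
  shows "D \<subseteq> derived_M"
  unfolding derived_def
  by (rule zspan_minimal)
    (use assms vzero_mem_derived_M vadd_mem_derived_M vsmul_mem_derived_M
      br_mem_derived_M_of_eigenvalues in auto)

text \<open>If \<open>D \<subseteq> [M, M] \<subseteq> M\<close> then \<open>w \<in> M\<close> forces \<open>k \<ge> 1\<close>, and \<open>\<phi> w = p^(k-1) \<mu> c\<close> lies in
  \<open>\<phi>([M, M]) \<subseteq> D = Z\<^sub>p p\<^sup>k c\<close>, so \<open>p\<close> divides \<open>\<mu>\<close>.\<close>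

lemma eigenvalue_divisible_of_derived_subset:
  assumes cM: "c \<notin> M" and DS: "D \<subseteq> derived_M"
    and mu: "mu \<in> zp p" "\<phi> (vsmul p (zp_of_int (int p)) c) = vsmul p mu c"
  shows "mu 1 = 0"
proof -
  have "w \<in> M" using DS derived_M_subset_M derived_eq zspan_base w_mem by blast
  then obtain k' where k': "k = Suc k'" using cM w_eq c_mem by (cases k) auto
  have "w = vsmul p (zp_of_int (int p ^ k')) (vsmul p (zp_of_int (int p)) c)"
    unfolding w_eq k' by (simp add: vsmul_vsmul zp_of_int_mult ac_simps)
  then have phi_w: "\<phi> w = vsmul p (zp_mul p (zp_of_int (int p ^ k')) mu) c"
    using phi_vsmul[OF zp_of_int_mem p_c_mem_M] mu by (simp add: vsmul_vsmul)
  have "\<phi> w \<in> line w"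
    using phi_derived_M_subset_derived DS derived_eq zspan_base[OF _ w_mem]
      zspan_singleton_subset_line[OF w_mem] by blast
  then obtain r where r: "r \<in> zp p" "\<phi> w = vsmul p (zp_mul p r (zp_of_int (int p ^ k))) c"
    unfolding mem_line_iff w_eq by (auto simp: vsmul_vsmul)
  have "zp_mul p (zp_of_int (int p ^ k')) mu = zp_mul p r (zp_of_int (int p ^ k))"
    using vsmul_right_cancel[OF c_mem c_nonzero] mu r phi_w by simp
  also have "\<dots> = zp_mul p (zp_of_int (int p ^ k')) (zp_mul p (zp_of_int (int p)) r)"
    unfolding k' by (rule ext) (simp add: zp_simps mod_simps, simp add: ac_simps)
  finally have "mu = zp_mul p (zp_of_int (int p)) r"
    using zp_mul_left_cancel[OF zp_of_int_mem zp_of_int_p_power_nonzero mu(1)] r(1) by simp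
  then show ?thesis by (simp add: zp_simps)
qed

lemma ad_eigenvalue_phi:
  assumes m: "m \<in> M" and mu: "mu \<in> zp p" "mu \<noteq> zp_zero"
    and phi_pc: "\<phi> (vsmul p (zp_of_int (int p)) c) = vsmul p mu c"
  shows "ad_eigenvalue (\<phi> m) = ad_eigenvalue m"
proof -
  have mL: "m \<in> L" and pm: "\<phi> m \<in> L" using m M_mem_L phi_mem by auto
  have "vsmul p (zp_mul p mu (ad_eigenvalue (\<phi> m))) c = \<phi> (br m (vsmul p (zp_of_int (int p)) c))"
    using phi_br[OF m p_c_mem_M] phi_pc pm c_mem mu ad_eigenvalue[OF pm]
    by (simp add: br_smul_right vsmul_vsmul)
  also have "br m (vsmul p (zp_of_int (int p)) c) = vsmul p (ad_eigenvalue m) (vsmul p (zp_of_int (int p)) c)"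
    using mL c_mem ad_eigenvalue[OF mL] by (simp add: br_smul_right vsmul_vsmul zp_mul_comm)
  also have "\<phi> \<dots> = vsmul p (ad_eigenvalue m) (vsmul p mu c)"
    using phi_vsmul[OF _ p_c_mem_M, of "ad_eigenvalue m"] phi_pc ad_eigenvalue[OF mL] by simp
  also have "\<dots> = vsmul p (zp_mul p mu (ad_eigenvalue m)) c"
    by (simp add: vsmul_vsmul zp_mul_comm)
  finally have "zp_mul p mu (ad_eigenvalue (\<phi> m)) = zp_mul p mu (ad_eigenvalue m)"
    using vsmul_right_cancel[OF c_mem c_nonzero] mu ad_eigenvalue[OF mL] ad_eigenvalue[OF pm]
    by simp
  then show ?thesis using zp_mul_left_cancel[OF mu] ad_eigenvalue[OF mL] ad_eigenvalue[OF pm] by simp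
qed

lemma center_subset_M:
  assumes cM: "c \<notin> M" and m0: "m0 \<in> M" "vsmul p (ad_eigenvalue m0) c \<notin> derived_M"
  shows "center \<subseteq> M"
proof
  fix z assume z: "z \<in> center"
  then have zL: "z \<in> L" by (simp add: center_def)
  obtain j m where j: "j < p" "m \<in> M" "z = vadd p (vsmul p (zp_of_int (int j)) c) m"
    using coset_representatives[OF c_mem cM zL] by blast
  have m0L: "m0 \<in> L" and mL: "m \<in> L" using m0 j M_mem_L by auto
  let ?X = "vsmul p (zp_of_int (int j)) (vsmul p (ad_eigenvalue m0) c)"
  show "z \<in> M"
  proof (cases "j = 0")
    case True
    then show ?thesis using j mL by simp
  next
    case False
    have "vzero = br m0 z" using z m0L by (simp add: center_def)
    also have "\<dots> = vadd p (br m0 m) ?X"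
      unfolding j(3) using m0L c_mem mL ad_eigenvalue[OF m0L]
      by (simp add: br_add_right br_smul_right vadd_comm)
    finally have "?X = vneg (br m0 m)"
      using vadd_eq_zero_imp_vneg[of "br m0 m" d ?X] m0L mL c_mem ad_eigenvalue[OF m0L] by simp
    then have X: "?X \<in> derived_M" using vneg_mem_derived_M br_mem_derived_M[OF m0(1) j(2)] by simp
    obtain s where s: "s \<in> zp p" "zp_mul p (zp_of_int (int j)) s = zp_of_int 1"
      using zp_of_int_invertible not_p_dvd_int False j(1) by blast
    have "vsmul p s ?X = vsmul p (zp_mul p (zp_mul p (zp_of_int (int j)) s) (ad_eigenvalue m0)) c"
      by (simp add: vsmul_vsmul zp_mul_assoc zp_mul_comm zp_mul_left_commute)
    also have "\<dots> = vsmul p (ad_eigenvalue m0) c" using s ad_eigenvalue[OF m0L] by simp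
    finally have "vsmul p s ?X = vsmul p (ad_eigenvalue m0) c" .
    then show ?thesis using vsmul_mem_derived_M[OF s(1) X] m0(2) by simp
  qed
qed

lemma phi_mem_center:
  assumes m0: "m0 \<in> M" "ad_eigenvalue m0 \<noteq> zp_zero"
    and mu: "mu \<in> zp p" "mu \<noteq> zp_zero" "\<phi> (vsmul p (zp_of_int (int p)) c) = vsmul p mu c"
    and ZM: "center \<subseteq> M" and z: "z \<in> center"
  shows "\<phi> z \<in> center"
proof -
  have zL: "z \<in> L" and zM: "z \<in> M" and pz: "\<phi> z \<in> L" and pm: "\<phi> m0 \<in> L"
    using z ZM phi_mem m0 by (auto simp: center_def)
  have pcL: "vsmul p (zp_of_int (int p)) c \<in> L" using c_mem by simp
  have "br z (vsmul p (zp_of_int (int p)) c) = vzero"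
    using z pcL br_anticomm[OF pcL zL] by (simp add: center_def vneg_def)
  then have "vzero = \<phi> (br z (vsmul p (zp_of_int (int p)) c))" by simp
  also have "\<dots> = vsmul p (zp_mul p mu (ad_eigenvalue (\<phi> z))) c"
    using phi_br[OF zM p_c_mem_M] mu pz c_mem ad_eigenvalue[OF pz]
    by (simp add: br_smul_right vsmul_vsmul)
  finally have "ad_eigenvalue (\<phi> z) = zp_zero"
    using vsmul_eq_zero[OF _ c_mem] zp_mul_eq_zero[OF mu(1)] mu ad_eigenvalue[OF pz] c_nonzero
    by (metis zp_mul_mem)
  moreover have "br (\<phi> m0) (\<phi> z) = vzero"
    using phi_br[OF m0(1) zM] z M_mem_L[OF m0(1)] by (simp add: center_def)
  ultimately show ?thesis
    using mem_center_of_commuting[OF pz pm] ad_eigenvalue_phi[OF m0(1) mu] m0(2) by simp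
qed

lemma exists_commuting_in_kernel:
  assumes d3: "d = 3" and x1: "x1 \<in> L" and lx: "ad_eigenvalue x1 \<noteq> zp_zero"
  obtains u where "u \<in> L" "u \<noteq> vzero" "ad_eigenvalue u = zp_zero" "br x1 u = vzero"
proof -
  have e: "unit_vec j \<in> L" if "j < 3" for j using unit_vec_mem[OF that] d3 by simp
  define l where "l j = ad_eigenvalue (unit_vec j)" for j
  have l: "l j \<in> zp p" "br (unit_vec j) c = vsmul p (l j) c" if "j < 3" for j
    using ad_eigenvalue[OF e[OF that]] unfolding l_def by auto
  have b_ex: "\<exists>s. s \<in> zp p \<and> br x1 (unit_vec j) = vsmul p s c" if "j < 3" for j
    using br_mem_derived[OF x1 e[OF that]] derived_subset_line mem_line_iff by blast
  define b where "b j = (SOME s. s \<in> zp p \<and> br x1 (unit_vec j) = vsmul p s c)" for j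
  have b: "b j \<in> zp p" "br x1 (unit_vec j) = vsmul p (b j) c" if "j < 3" for j
    using someI_ex[OF b_ex[OF that]] unfolding b_def by auto
  have br_left: "br (vec3 a0 a1 a2) c = vsmul p (dot3 a0 a1 a2 (l 0) (l 1) (l 2)) c"
    if "a0 \<in> zp p" "a1 \<in> zp p" "a2 \<in> zp p" for a0 a1 a2
  proof (rule linear_map_vec3[OF _ _ _ that])
    fix x y assume "x \<in> zpvec p 3" "y \<in> zpvec p 3"
    then show "br (vadd p x y) c = vadd p (br x c) (br y c)"
      using br_add_left[of x y c] c_mem d3 by simp
  next
    fix a x assume "a \<in> zp p" "x \<in> zpvec p 3"
    then show "br (vsmul p a x) c = vsmul p a (br x c)"
      using br_smul_left[of a x c] c_mem d3 by simp
  qed (rule l(2))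
  have br_right: "br x1 (vec3 a0 a1 a2) = vsmul p (dot3 a0 a1 a2 (b 0) (b 1) (b 2)) c"
    if "a0 \<in> zp p" "a1 \<in> zp p" "a2 \<in> zp p" for a0 a1 a2
  proof (rule linear_map_vec3[OF _ _ _ that])
    fix x y assume "x \<in> zpvec p 3" "y \<in> zpvec p 3"
    then show "br x1 (vadd p x y) = vadd p (br x1 x) (br x1 y)"
      using br_add_right[of x y x1] x1 d3 by simp
  next
    fix a x assume "a \<in> zp p" "x \<in> zpvec p 3"
    then show "br x1 (vsmul p a x) = vsmul p a (br x1 x)"
      using br_smul_right[of a x1 x] x1 d3 by simp
  qed (rule b(2))
  have x1_3: "x1 \<in> zpvec p 3" using x1 d3 by simp
  then have x1_coords: "x1 0 \<in> zp p" "x1 1 \<in> zp p" "x1 2 \<in> zp p"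
    using zpvec_coord_mem by auto
  have l_nonzero: "\<not> (l 0 = zp_zero \<and> l 1 = zp_zero \<and> l 2 = zp_zero)"
  proof
    assume l0: "l 0 = zp_zero \<and> l 1 = zp_zero \<and> l 2 = zp_zero"
    have "br x1 c = br (vec3 (x1 0) (x1 1) (x1 2)) c"
      using vec3_coords[OF x1_3] by (rule arg_cong)
    also have "\<dots> = vsmul p zp_zero c"
      using br_left[OF x1_coords] l0 by (simp add: dot3_def)
    finally show False using ad_eigenvalue_unique[OF x1 zp_zero_mem] lx by simp
  qed
  have lz: "l 0 \<in> zp p" "l 1 \<in> zp p" "l 2 \<in> zp p" and bz: "b 0 \<in> zp p" "b 1 \<in> zp p" "b 2 \<in> zp p"
    using l b by simp_all
  obtain a0 a1 a2 where a: "a0 \<in> zp p" "a1 \<in> zp p" "a2 \<in> zp p"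
    "\<not> (a0 = zp_zero \<and> a1 = zp_zero \<and> a2 = zp_zero)"
    "dot3 a0 a1 a2 (l 0) (l 1) (l 2) = zp_zero" "dot3 a0 a1 a2 (b 0) (b 1) (b 2) = zp_zero"
    by (rule dot3_common_zero[OF lz bz l_nonzero])
  have u: "vec3 a0 a1 a2 \<in> L" using vec3_mem[OF a(1-3)] d3 by simp
  show ?thesis
  proof (rule that[OF u])
    show "vec3 a0 a1 a2 \<noteq> vzero" using a(4) vec3_eq_zero_iff by blast
    show "ad_eigenvalue (vec3 a0 a1 a2) = zp_zero"
      using ad_eigenvalue_unique[OF u zp_zero_mem] br_left[OF a(1-3)] a(5) by simp
    show "br x1 (vec3 a0 a1 a2) = vzero" using br_right[OF a(1-3)] a(6) by simp
  qed
qed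

lemma exists_nonzero_phi_invariant_ideal:
  assumes d3: "d = 3"
  shows "\<exists>I. phi_invariant p d br M \<phi> I \<and> I \<noteq> {vzero}"
proof (cases "c \<in> M")
  case True
  then have "phi_invariant p d br M \<phi> (line c)"
    using phi_invariant_line phi_mem_line_c self_mem_line[OF c_mem] by blast
  then show ?thesis using self_mem_line[OF c_mem] c_nonzero by blast
next
  case cM: False
  let ?pc = "vsmul p (zp_of_int (int p)) c"
  have pc_line: "?pc \<in> line c" by (rule line_memI) simp
  then obtain mu where mu: "mu \<in> zp p" "\<phi> ?pc = vsmul p mu c"
    using phi_mem_line_c[OF p_c_mem_M] mem_line_iff by blast
  show ?thesis
  proof (cases "mu 1 = 0")
    case True
    then obtain s where s: "s \<in> zp p" "mu = zp_mul p (zp_of_int (int p)) s"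
      using zp_divide_by_p[OF mu(1)] by blast
    then have "\<phi> ?pc = vsmul p s ?pc" using mu(2) by (simp add: vsmul_vsmul zp_mul_comm)
    then have "\<phi> ?pc \<in> line ?pc" using line_memI[OF s(1)] by simp
    then have "phi_invariant p d br M \<phi> (line ?pc)"
      by (rule phi_invariant_line[OF p_c_mem_M pc_line])
    moreover have "?pc \<noteq> vzero"
      using vsmul_eq_zero[OF zp_of_int_mem c_mem] zp_of_int_p_power_nonzero[of 1] c_nonzero by auto
    ultimately show ?thesis using self_mem_line[of ?pc d] c_mem by auto
  next
    case False
    then have mu_nonzero: "mu \<noteq> zp_zero" by (auto simp: zp_zero_def)
    obtain m0 where m0: "m0 \<in> M" "vsmul p (ad_eigenvalue m0) c \<notin> derived_M"
      using eigenvalue_divisible_of_derived_subset[OF cM derived_subset_derived_M[OF cM] mu] False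
      by blast
    then have m0_nonzero: "ad_eigenvalue m0 \<noteq> zp_zero" using vzero_mem_derived_M by auto
    have "phi_invariant p d br M \<phi> center"
      using phi_invariantI[OF center_ideal] center_subset_M[OF cM m0]
        phi_mem_center[OF m0(1) m0_nonzero mu(1) mu_nonzero mu(2)] by blast
    moreover obtain u where "u \<in> L" "u \<noteq> vzero" "ad_eigenvalue u = zp_zero" "br m0 u = vzero"
      using exists_commuting_in_kernel[OF d3 M_mem_L[OF m0(1)] m0_nonzero] by blast
    then have "u \<in> center" "u \<noteq> vzero"
      using mem_center_of_commuting[OF _ M_mem_L[OF m0(1)] _ m0_nonzero] by auto
    ultimately show ?thesis by blast
  qed
qed

end

theorem proposition1p13:
  fixes p :: nat and br :: "zpvec \<Rightarrow> zpvec \<Rightarrow> zpvec"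
  assumes "prime p"
    and "lie_lattice p 3 br"
    and "free_of_rank p (derived p 3 br) 1"
  shows "\<not> self_similar_of_index p 3 br p"
proof
  assume "self_similar_of_index p 3 br p"
  then obtain M \<phi> where ve: "virtual_endo p 3 br M \<phi>" and index: "card (cosets p 3 M) = p"
    and simple: "simple_ve p 3 br M \<phi>"
    unfolding self_similar_of_index_def by blast
  interpret index_p_virtual_endo p 3 br M \<phi>
    using assms ve index by unfold_locales
  obtain w where w: "w \<noteq> vzero" "w \<in> D" "D = zspan p {w}"
    using free_of_rank_one_generator[OF assms(3)] by blast
  obtain k c where "primitive 3 c" "w = vsmul p (zp_of_int (int p ^ k)) c"
    using primitive_factorization[OF set_mp[OF derived_subset w(2)] w(1)] by blast
  then interpret rank_one_derived p 3 br M \<phi> w c k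
    using w by unfold_locales
  show False
    using exists_nonzero_phi_invariant_ideal simple unfolding simple_ve_def by blast
qed

end
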